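(* Let $a$ be a positive integer and let $L_{a,a} = \{C_{i,1} : 1 \le i \le a+1\} \cup \{C_{1,j} : 1 < j \le a+1\}$, of size $n = 2a+1$. Then on the $n \times n$ board, $\mathrm{cp}_{\mathrm{free}}(L_{a,a}) = 2$.
   Context: For integers $i,j$, $C_{i,j}$ denotes the unit square cell in column $i$ and row $j$ of the integer grid (columns numbered left to right, rows numbered top to bottom). A polyomino is a finite set of cells; its size is its number of cells. For a polyomino $\mathcal{P}$ of size $n$ the board is $\mathbb{B} = \{C_{i,j} : 1 \le i,j \le n\}$. The shift of $\mathcal{P}$ by integers $(c,d)$ is $\mathcal{P}+(c,d) = \{C_{x+c,y+d} : C_{x,y} \in \mathcal{P}\}$. For $0<a\le b$ and $L_{a,b} = \{C_{i,1} : 1 \le i \le a+1\} \cup \{C_{1,j} : 1 < j \le b+1\}$, the rotations by $90^\circ, 180^\circ, 270^\circ$ clockwise are $LR_{a,b} = \{C_{i,1} : 1 \le i \le b+1\} \cup \{C_{b+1,j} : 1 \le j \le a+1\}$, $LR^2_{a,b} = \{C_{i,b+1} : 1 \le i \le a+1\} \cup \{C_{a+1,j} : 1 \le j \le b+1\}$, $LR^3_{a,b} = \{C_{i,a+1} : 1 \le i \le b+1\} \cup \{C_{1,j} : 1 \le j \le a+1\}$ (reflections are not allowed). A free copy of $L_{a,b}$ is any shift of one of these four. A set of polyominoes is a valid arrangement if each is contained in $\mathbb{B}$ and they are pairwise disjoint. A free packing of $\mathcal{P}$ is a set of free copies of $\mathcal{P}$ forming a valid arrangement such that adding any further free copy of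 $\mathcal{P}$ yields an invalid arrangement. The clumsy free packing number $\mathrm{cp}_{\mathrm{free}}(\mathcal{P})$ is the minimum number of polyominoes in a free packing of $\mathcal{P}$ on the $n \times n$ board. *)

theory Defs
  imports Main
begin

text \<open>A cell C_{i,j} (column i, row j) is the pair (i, j) of integers; a polyomino is a set of cells.\<close>
type_synonym cell = "int \<times> int"

definition board :: "nat \<Rightarrow> cell set" where
  "board n = {(i, j). 1 \<le> i \<and> i \<le> int n \<and> 1 \<le> j \<and> j \<le> int n}"

definition shift :: "cell set \<Rightarrow> int \<Rightarrow> int \<Rightarrow> cell set" where
  "shift P c d = (\<lambda>(x, y). (x + c, y + d)) ` P"

definition Lshape :: "nat \<Rightarrow> nat \<Rightarrow> cell set" where
  "Lshape a b = {(i, 1) | i. 1 \<le> i \<and> i \<le> int a + 1} \<union> {(1, j) | j. 1 < j \<and> j \<le> int b + 1}"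

definition LR :: "nat \<Rightarrow> nat \<Rightarrow> cell set" where
  "LR a b = {(i, 1) | i. 1 \<le> i \<and> i \<le> int b + 1} \<union> {(int b + 1, j) | j. 1 \<le> j \<and> j \<le> int a + 1}"

definition LR2 :: "nat \<Rightarrow> nat \<Rightarrow> cell set" where
  "LR2 a b = {(i, int b + 1) | i. 1 \<le> i \<and> i \<le> int a + 1} \<union> {(int a + 1, j) | j. 1 \<le> j \<and> j \<le> int b + 1}"

definition LR3 :: "nat \<Rightarrow> nat \<Rightarrow> cell set" where
  "LR3 a b = {(i, int a + 1) | i. 1 \<le> i \<and> i \<le> int b + 1} \<union> {(1, j) | j. 1 \<le> j \<and> j \<le> int a + 1}"

text \<open>Free copies: shifts of the four rotations (no reflections).\<close>
definition free_copies :: "nat \<Rightarrow> nat \<Rightarrow> cell set set" where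
  "free_copies a b = {shift Q c d | Q c d. Q \<in> {Lshape a b, LR a b, LR2 a b, LR3 a b}}"

definition valid_arrangement :: "nat \<Rightarrow> cell set set \<Rightarrow> bool" where
  "valid_arrangement n S \<longleftrightarrow> (\<forall>P\<in>S. P \<subseteq> board n) \<and> pairwise disjnt S"

definition free_packing :: "nat \<Rightarrow> nat \<Rightarrow> cell set set \<Rightarrow> bool" where
  "free_packing a b S \<longleftrightarrow>
     S \<subseteq> free_copies a b \<and> valid_arrangement (card (Lshape a b)) S \<and>
     (\<forall>Q\<in>free_copies a b. Q \<notin> S \<longrightarrow> \<not> valid_arrangement (card (Lshape a b)) (insert Q S))"

definition cp_free_L :: "nat \<Rightarrow> nat \<Rightarrow> nat" where
  "cp_free_L a b = (LEAST k. \<exists>S. free_packing a b S \<and> card S = k)"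

end

theory Submission
  imports Defs
begin

(* A free copy of L_{a,a} lies on the (2a+1)-board exactly when it is a rotation shifted by
   (c, d) with 0 <= c, d <= a; its cells then lie in the (a+1)-square with top-left cell
   (c+1, d+1).

   Two copies suffice: the one covering the upper half of the central column and the right
   half of the central row, and the one covering the lower half of column a and the bottom
   row from column a on, meet every fitting copy.
   One copy never suffices: its square avoids the last row and column, or the first row and
   column, or it sits in the top-right or bottom-left corner; in each case one of the four
   corner copies, which hug two sides of the board, is still free. *)

lemma mem_shift [simp]: "(x, y) \<in> shift P c d \<longleftrightarrow> (x - c, y - d) \<in> P"
  by (force simp: shift_def)

lemma mem_Lshape [simp]:
  "(x, y) \<in> Lshape a b \<longleftrightarrow> (y = 1 \<and> 1 \<le> x \<and> x \<le> int a + 1) \<or> (x = 1 \<and> 1 < y \<and> y \<le> int b + 1)"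
  by (auto simp: Lshape_def)

lemma mem_LR [simp]:
  "(x, y) \<in> LR a b \<longleftrightarrow> (y = 1 \<and> 1 \<le> x \<and> x \<le> int b + 1) \<or> (x = int b + 1 \<and> 1 \<le> y \<and> y \<le> int a + 1)"
  by (auto simp: LR_def)

lemma mem_LR2 [simp]:
  "(x, y) \<in> LR2 a b \<longleftrightarrow> (y = int b + 1 \<and> 1 \<le> x \<and> x \<le> int a + 1) \<or> (x = int a + 1 \<and> 1 \<le> y \<and> y \<le> int b + 1)"
  by (auto simp: LR2_def)

lemma mem_LR3 [simp]:
  "(x, y) \<in> LR3 a b \<longleftrightarrow> (y = int a + 1 \<and> 1 \<le> x \<and> x \<le> int b + 1) \<or> (x = 1 \<and> 1 \<le> y \<and> y \<le> int a + 1)"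
  by (auto simp: LR3_def)

lemma mem_board [simp]: "(x, y) \<in> board n \<longleftrightarrow> 1 \<le> x \<and> x \<le> int n \<and> 1 \<le> y \<and> y \<le> int n"
  by (simp add: board_def)

lemma finite_board: "finite (board n)"
proof (rule finite_subset)
  show "board n \<subseteq> {1..int n} \<times> {1..int n}" by auto
qed simp

lemma card_Lshape: "card (Lshape a b) = a + b + 1"
proof -
  have "Lshape a b = (\<lambda>i. (i, 1)) ` {1..int a + 1} \<union> (\<lambda>j. (1, j)) ` {2..int b + 1}"
    by (auto simp: Lshape_def)
  moreover have "card ((\<lambda>i. (i, 1::int)) ` {1..int a + 1}) = a + 1"
    by (subst card_image) (auto simp: inj_on_def)
  moreover have "card ((\<lambda>j. (1::int, j)) ` {2..int b + 1}) = b"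
    by (subst card_image) (auto simp: inj_on_def)
  moreover have "(\<lambda>i. (i, 1::int)) ` {1..int a + 1} \<inter> (\<lambda>j. (1, j)) ` {2..int b + 1} = {}"
    by auto
  ultimately show ?thesis
    by (simp add: card_Un_disjoint)
qed

definition rotations :: "nat \<Rightarrow> nat \<Rightarrow> cell set set" where
  "rotations a b = {Lshape a b, LR a b, LR2 a b, LR3 a b}"

lemma mem_free_copies: "Q \<in> free_copies a b \<longleftrightarrow> (\<exists>R\<in>rotations a b. \<exists>c d. Q = shift R c d)"
  by (auto simp: free_copies_def rotations_def)

lemma shift_rotation_in_free_copies: "R \<in> rotations a b \<Longrightarrow> shift R c d \<in> free_copies a b"
  by (auto simp: mem_free_copies)

lemma free_copy_nonempty: "Q \<in> free_copies a b \<Longrightarrow> Q \<noteq> {}"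
proof -
  have "(1, 1) \<in> R \<or> (int a + 1, 1) \<in> R" if "R \<in> rotations a b" for R
    using that by (auto simp: rotations_def)
  then have "R \<noteq> {}" if "R \<in> rotations a b" for R
    using that by blast
  then show "Q \<in> free_copies a b \<Longrightarrow> Q \<noteq> {}"
    by (auto simp: mem_free_copies shift_def)
qed

lemma finite_valid_arrangement: "valid_arrangement n S \<Longrightarrow> finite S"
  unfolding valid_arrangement_def
  by (meson Pow_iff finite_Pow_iff finite_board finite_subset subsetI)

lemma valid_arrangement_insert:
  "Q \<notin> S \<Longrightarrow> valid_arrangement n (insert Q S) \<longleftrightarrow>
     valid_arrangement n S \<and> Q \<subseteq> board n \<and> (\<forall>P\<in>S. disjnt P Q)"
  by (auto simp: valid_arrangement_def pairwise_insert disjnt_sym)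

lemma free_packing_iff_blocking:
  "free_packing a b S \<longleftrightarrow>
     S \<subseteq> free_copies a b \<and> valid_arrangement (card (Lshape a b)) S \<and>
     (\<forall>Q\<in>free_copies a b. Q \<subseteq> board (card (Lshape a b)) \<longrightarrow> (\<exists>P\<in>S. \<not> disjnt P Q))"
proof -
  have "\<not> disjnt Q Q" if "Q \<in> free_copies a b" for Q
    using free_copy_nonempty[OF that] by (simp add: disjnt_def)
  then show ?thesis
    unfolding free_packing_def by (metis valid_arrangement_insert)
qed

lemma mem_shift_rotation_square:
  "R \<in> rotations a a \<Longrightarrow> (x, y) \<in> shift R c d \<Longrightarrow>
     c < x \<and> x \<le> c + int a + 1 \<and> d < y \<and> y \<le> d + int a + 1"
  by (auto simp: rotations_def)

lemma rotation_square_opposite_corners: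
  assumes "R \<in> rotations a a"
  shows "(1, 1) \<in> R \<and> (int a + 1, int a + 1) \<in> R \<or> (int a + 1, 1) \<in> R \<and> (1, int a + 1) \<in> R"
  using assms by (auto simp: rotations_def)

lemma shift_rotation_subset_board_iff:
  assumes "R \<in> rotations a a"
  shows "shift R c d \<subseteq> board (2 * a + 1) \<longleftrightarrow> 0 \<le> c \<and> c \<le> int a \<and> 0 \<le> d \<and> d \<le> int a"
proof
  assume on_board: "shift R c d \<subseteq> board (2 * a + 1)"
  have "(x + c, y + d) \<in> board (2 * a + 1)" if "(x, y) \<in> R" for x y
    by (rule subsetD[OF on_board]) (simp add: that)
  then show "0 \<le> c \<and> c \<le> int a \<and> 0 \<le> d \<and> d \<le> int a"
    using rotation_square_opposite_corners[OF assms] by fastforce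
next
  assume "0 \<le> c \<and> c \<le> int a \<and> 0 \<le> d \<and> d \<le> int a"
  then show "shift R c d \<subseteq> board (2 * a + 1)"
    using mem_shift_rotation_square[OF assms] by fastforce
qed

lemma free_copy_on_board_square:
  assumes "Q \<in> free_copies a a" "Q \<subseteq> board (2 * a + 1)"
  obtains R c d where "R \<in> rotations a a" "Q = shift R c d"
    "0 \<le> c" "c \<le> int a" "0 \<le> d" "d \<le> int a"
  using assms shift_rotation_subset_board_iff by (metis mem_free_copies)

lemma not_disjntI: "z \<in> A \<Longrightarrow> z \<in> B \<Longrightarrow> \<not> disjnt A B"
  by (auto simp: disjnt_def)

definition central_pair :: "nat \<Rightarrow> cell set set" where
  "central_pair a = {shift (LR3 a a) (int a) 0, shift (LR3 a a) (int a - 1) (int a)}"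

lemma central_pair_meets_shift_rotation:
  assumes "0 < a" "R \<in> rotations a a" "0 \<le> c" "c \<le> int a" "0 \<le> d" "d \<le> int a"
  shows "\<exists>P\<in>central_pair a. \<not> disjnt P (shift R c d)"
proof -
  define P1 P2 where "P1 = shift (LR3 a a) (int a) 0" and "P2 = shift (LR3 a a) (int a - 1) (int a)"
  have "\<not> disjnt P1 (shift R c d) \<or> \<not> disjnt P2 (shift R c d)"
  proof -
    consider "R = Lshape a a \<or> R = LR a a" | "R = LR2 a a" | "R = LR3 a a \<and> (d = 0 \<or> c = int a)"
      | "R = LR3 a a \<and> 0 < d \<and> c < int a"
      using assms unfolding rotations_def by fastforce
    then show ?thesis
    proof cases
      case 1
      then have "\<not> disjnt P1 (shift R c d)"
        by (intro not_disjntI[of "(int a + 1, d + 1)"]) (use assms in \<open>auto simp: P1_def\<close>)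
      then show ?thesis ..
    next
      case 2
      then have "\<not> disjnt P1 (shift R c d)"
        by (intro not_disjntI[of "(c + int a + 1, int a + 1)"]) (use assms in \<open>auto simp: P1_def\<close>)
      then show ?thesis ..
    next
      case 3
      then have "\<not> disjnt P1 (shift R c d)"
        by (intro not_disjntI[of "(int a + 1, int a + 1)"]) (use assms in \<open>auto simp: P1_def\<close>)
      then show ?thesis ..
    next
      case 4
      then have "\<not> disjnt P2 (shift R c d)"
        by (intro not_disjntI[of "(int a, d + int a + 1)"]) (use assms in \<open>auto simp: P2_def\<close>)
      then show ?thesis ..
    qed
  qed
  then show ?thesis
    by (auto simp: central_pair_def P1_def P2_def)
qed

lemma exists_free_copy_disjnt_shift_rotation:
  assumes "0 < a" "R \<in> rotations a a" "0 \<le> c" "c \<le> int a" "0 \<le> d" "d \<le> int a"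
  shows "\<exists>Q\<in>free_copies a a. Q \<subseteq> board (2 * a + 1) \<and> disjnt (shift R c d) Q"
proof -
  have corner: ?thesis
    if "R' \<in> rotations a a" "c' \<in> {0, int a}" "d' \<in> {0, int a}" "disjnt (shift R c d) (shift R' c' d')"
    for R' c' d'
  proof -
    have "shift R' c' d' \<subseteq> board (2 * a + 1)"
      using that(2,3) shift_rotation_subset_board_iff[OF that(1)] by auto
    then show ?thesis
      using that(4) shift_rotation_in_free_copies[OF that(1)] by blast
  qed
  have "shift R c d \<subseteq> {c<..c + int a + 1} \<times> {d<..d + int a + 1}"
    using mem_shift_rotation_square[OF assms(2)] by fastforce
  then have box: "disjnt (shift R c d) Q"
    if "disjnt ({c<..c + int a + 1} \<times> {d<..d + int a + 1}) Q" for Q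
    using that disjnt_subset1 by blast
  consider "c < int a \<and> d < int a" | "0 < c \<and> 0 < d" | "c = int a \<and> d = 0" | "c = 0 \<and> d = int a"
    using assms by linarith
  then show ?thesis
  proof cases
    case 1
    then have "disjnt (shift R c d) (shift (LR2 a a) (int a) (int a))"
      by (intro box) (auto simp: disjnt_def)
    then show ?thesis by (intro corner) (auto simp: rotations_def)
  next
    case 2
    then have "disjnt (shift R c d) (shift (Lshape a a) 0 0)"
      by (intro box) (auto simp: disjnt_def)
    then show ?thesis by (intro corner) (auto simp: rotations_def)
  next
    case 3
    then have "disjnt (shift R c d) (shift (LR3 a a) 0 (int a))"
      using assms(1) by (intro box) (auto simp: disjnt_def)
    then show ?thesis by (intro corner) (auto simp: rotations_def)
  next
    case 4
    then have "disjnt (shift R c d) (shift (LR a a) (int a) 0)"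
      using assms(1) by (intro box) (auto simp: disjnt_def)
    then show ?thesis by (intro corner) (auto simp: rotations_def)
  qed
qed

lemma free_packing_central_pair:
  assumes "0 < a"
  shows "free_packing a a (central_pair a)"
proof -
  have rot: "LR3 a a \<in> rotations a a" by (simp add: rotations_def)
  have "central_pair a \<subseteq> free_copies a a"
    using shift_rotation_in_free_copies[OF rot] by (simp add: central_pair_def)
  moreover have "valid_arrangement (2 * a + 1) (central_pair a)"
  proof -
    have "P \<subseteq> board (2 * a + 1)" if "P \<in> central_pair a" for P
      using that assms shift_rotation_subset_board_iff[OF rot] by (auto simp: central_pair_def)
    moreover have "disjnt (shift (LR3 a a) (int a) 0) (shift (LR3 a a) (int a - 1) (int a))"
      using assms by (auto simp: disjnt_def)
    ultimately show ?thesis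
      by (auto simp: valid_arrangement_def central_pair_def pairwise_insert disjnt_sym)
  qed
  moreover have "\<exists>P\<in>central_pair a. \<not> disjnt P Q"
    if Q: "Q \<in> free_copies a a" "Q \<subseteq> board (2 * a + 1)" for Q
  proof -
    obtain R c d where "R \<in> rotations a a" "Q = shift R c d" "0 \<le> c" "c \<le> int a" "0 \<le> d" "d \<le> int a"
      using Q by (rule free_copy_on_board_square)
    then show ?thesis
      using central_pair_meets_shift_rotation[OF assms] by simp
  qed
  moreover have "card (Lshape a a) = 2 * a + 1"
    by (simp add: card_Lshape)
  ultimately show ?thesis
    by (simp add: free_packing_iff_blocking)
qed

lemma card_central_pair: "0 < a \<Longrightarrow> card (central_pair a) = 2"
proof -
  assume "0 < a"
  then have "(int a + 1, 1) \<in> shift (LR3 a a) (int a) 0 - shift (LR3 a a) (int a - 1) (int a)"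
    by simp
  then have "shift (LR3 a a) (int a) 0 \<noteq> shift (LR3 a a) (int a - 1) (int a)"
    by blast
  then show ?thesis
    by (simp add: central_pair_def)
qed

lemma card_free_packing_ge_2:
  assumes "0 < a" "free_packing a a S"
  shows "2 \<le> card S"
proof -
  have "card (Lshape a a) = 2 * a + 1"
    by (simp add: card_Lshape)
  then have S: "S \<subseteq> free_copies a a" "valid_arrangement (2 * a + 1) S"
    and blocking: "\<And>Q. Q \<in> free_copies a a \<Longrightarrow> Q \<subseteq> board (2 * a + 1) \<Longrightarrow> \<exists>P\<in>S. \<not> disjnt P Q"
    using assms(2) by (simp_all add: free_packing_iff_blocking)
  have rot: "Lshape a a \<in> rotations a a" by (simp add: rotations_def)
  have "shift (Lshape a a) 0 0 \<in> free_copies a a" "shift (Lshape a a) 0 0 \<subseteq> board (2 * a + 1)"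
    by (rule shift_rotation_in_free_copies[OF rot]) (subst shift_rotation_subset_board_iff[OF rot], simp)
  then obtain P where P: "P \<in> S"
    using blocking by blast
  then have "P \<in> free_copies a a" "P \<subseteq> board (2 * a + 1)"
    using S by (auto simp: valid_arrangement_def)
  then obtain R c d where "R \<in> rotations a a" "P = shift R c d" "0 \<le> c" "c \<le> int a" "0 \<le> d" "d \<le> int a"
    by (rule free_copy_on_board_square)
  then obtain Q where Q: "Q \<in> free_copies a a" "Q \<subseteq> board (2 * a + 1)" "disjnt P Q"
    using exists_free_copy_disjnt_shift_rotation[OF assms(1)] by blast
  then obtain P' where "P' \<in> S" "\<not> disjnt P' Q"
    using blocking by blast
  with Q(3) have "P' \<noteq> P"
    by blast
  with P \<open>P' \<in> S\<close> have "{P, P'} \<subseteq> S" "card {P, P'} = 2"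
    by auto
  then show ?thesis
    using finite_valid_arrangement[OF S(2)] by (metis card_mono)
qed

theorem theorem4:
  fixes a :: nat
  assumes "0 < a"
  shows "card (Lshape a a) = 2 * a + 1 \<and> cp_free_L a a = 2"
proof
  show "card (Lshape a a) = 2 * a + 1"
    by (simp add: card_Lshape)
  show "cp_free_L a a = 2"
    unfolding cp_free_L_def
  proof (rule Least_equality)
    show "\<exists>S. free_packing a a S \<and> card S = 2"
      using free_packing_central_pair card_central_pair assms by blast
    show "\<And>k. \<exists>S. free_packing a a S \<and> card S = k \<Longrightarrow> 2 \<le> k"
      using card_free_packing_ge_2 assms by blast
  qed
qed

end
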